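(* Let $S=\{(X_1,y_1),(X_2,y_2)\}\in\mathcal{S}_2$ be fitted in the cyclic ordering, and let $k=2n$ with $n\ge1$. Then $$F_{\tau,S}(k)\le\frac12\max_i\Big\{(\cos^2\theta_i)^{k-1}(1-\cos^2\theta_i)\Big\},$$ where the maximum ranges over the non-zero principal angles $\theta_i\in(0,\pi/2]$ between $\mathrm{range}(X_1^\top)$ and $\mathrm{range}(X_2^\top)$ (a maximum over the empty set is $0$). Moreover, if all non-zero singular values of $X_1$ equal $1$, then $F_{\tau,S}(k)=\frac12\|(I-P_1)(P_2P_1)^n w^\star\|^2$, and the supremum of $F_{\tau,S}(k)$ over all labels $y_1,y_2$ with $S\in\mathcal{S}_2$ equals the right-hand side above.
   Context: Let $d\ge 1$, $T\ge1$. A task is a pair $(X_m,y_m)$ with $X_m\in\mathbb{R}^{n_m\times d}$, $y_m\in\mathbb{R}^{n_m}$ and $\operatorname{rank}(X_m)<d$. $\mathcal{S}_T$ denotes the set of collections $S=\{(X_m,y_m)\}_{m=1}^T$ of $T$ tasks such that $\|X_m\|\le 1$ (spectral norm) for all $m$ and there exists $w\in\mathbb{R}^d$ with $\|w\|\le 1$ and $y_m=X_mw$ for all $m$. Given $S$ and an ordering $\tau:\mathbb{N}^+\to\{1,\dots,T\}$, the iterates are $w_0=0$ and $w_t=w_{t-1}+X_{\tau(t)}^+(y_{\tau(t)}-X_{\tau(t)}w_{t-1})$, with $A^+$ the Moore–Penrose pseudoinverse. The forgetting at iteration $k$ is $F_{\tau,S}(k)=\frac1k\sum_{t=1}^k\|X_{\tau(t)}w_k-y_{\tau(t)}\|^2$.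 The cyclic ordering is $\tau(t)=((t-1)\bmod T)+1$. $w^\star$ denotes the minimum Euclidean-norm vector with $X_mw^\star=y_m$ for all $m$. $P_m=I-X_m^+X_m$ is the orthogonal projection onto $\ker X_m$. Principal angles: for data matrices $X_1,X_2$ let $r=\min(\operatorname{rank}X_1,\operatorname{rank}X_2)$. The principal angles $0\le\theta_1\le\dots\le\theta_r\le\pi/2$ between $\mathrm{range}(X_1^\top)$ and $\mathrm{range}(X_2^\top)$ are defined recursively by $\cos\theta_i=|u_i^\top v_i|$, where $(u_i,v_i)$ maximizes $|u^\top v|$ over unit vectors $u\in\mathrm{range}(X_1^\top)$, $v\in\mathrm{range}(X_2^\top)$ with $u\perp u_j$, $v\perp v_j$ for all $j<i$. *)

theory Defs
  imports "HOL-Analysis.Analysis"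
begin

definition pinv :: "real^'d^'n \<Rightarrow> real^'n^'d" where
  "pinv A = (THE B. A ** B ** A = A \<and> B ** A ** B = B \<and>
                    transpose (A ** B) = A ** B \<and> transpose (B ** A) = B ** A)"

definition spec_norm :: "real^'d^'n \<Rightarrow> real" where
  "spec_norm A = onorm (\<lambda>x. A *v x)"

definition is_task :: "real^'d^'n \<Rightarrow> real^'n \<Rightarrow> bool" where
  "is_task X y \<longleftrightarrow> rank X < CARD('d)"

definition in_S2 :: "real^'d^'n1 \<Rightarrow> real^'n1 \<Rightarrow> real^'d^'n2 \<Rightarrow> real^'n2 \<Rightarrow> bool" where
  "in_S2 X1 y1 X2 y2 \<longleftrightarrow> is_task X1 y1 \<and> is_task X2 y2 \<and>
     spec_norm X1 \<le> 1 \<and> spec_norm X2 \<le> 1 \<and>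
     (\<exists>w. norm w \<le> 1 \<and> y1 = X1 *v w \<and> y2 = X2 *v w)"

definition tau2 :: "nat \<Rightarrow> nat" where
  "tau2 t = ((t - 1) mod 2) + 1"

fun cyc_iter :: "real^'d^'n1 \<Rightarrow> real^'n1 \<Rightarrow> real^'d^'n2 \<Rightarrow> real^'n2 \<Rightarrow> nat \<Rightarrow> real^'d" where
  "cyc_iter X1 y1 X2 y2 0 = 0"
| "cyc_iter X1 y1 X2 y2 (Suc t) =
     (let w = cyc_iter X1 y1 X2 y2 t in
       if tau2 (Suc t) = 1 then w + pinv X1 *v (y1 - X1 *v w)
       else w + pinv X2 *v (y2 - X2 *v w))"

definition forgetting :: "real^'d^'n1 \<Rightarrow> real^'n1 \<Rightarrow> real^'d^'n2 \<Rightarrow> real^'n2 \<Rightarrow> nat \<Rightarrow> real" where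
  "forgetting X1 y1 X2 y2 k =
     (let wk = cyc_iter X1 y1 X2 y2 k in
      (1 / real k) * (\<Sum>t\<in>{1..k}.
         (if tau2 t = 1 then (norm (X1 *v wk - y1))\<^sup>2 else (norm (X2 *v wk - y2))\<^sup>2)))"

definition min_norm_sol :: "real^'d^'n1 \<Rightarrow> real^'n1 \<Rightarrow> real^'d^'n2 \<Rightarrow> real^'n2 \<Rightarrow> real^'d" where
  "min_norm_sol X1 y1 X2 y2 = (THE w. (X1 *v w = y1 \<and> X2 *v w = y2) \<and>
      (\<forall>v. X1 *v v = y1 \<and> X2 *v v = y2 \<longrightarrow> norm w \<le> norm v))"

definition kerproj :: "real^'d^'n \<Rightarrow> real^'d^'d" where
  "kerproj X = mat 1 - pinv X ** X"

definition rowspace :: "real^'d^'n \<Rightarrow> (real^'d) set" where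
  "rowspace X = range (\<lambda>z. transpose X *v z)"

definition principal_seq :: "'a::euclidean_space set \<Rightarrow> 'a set \<Rightarrow> (nat \<Rightarrow> 'a) \<Rightarrow> (nat \<Rightarrow> 'a) \<Rightarrow> bool" where
  "principal_seq U V u v \<longleftrightarrow>
     (\<forall>i < min (dim U) (dim V).
        u i \<in> U \<and> v i \<in> V \<and> norm (u i) = 1 \<and> norm (v i) = 1 \<and>
        (\<forall>j<i. u i \<bullet> u j = 0 \<and> v i \<bullet> v j = 0) \<and>
        (\<forall>x\<in>U. \<forall>y\<in>V. norm x = 1 \<longrightarrow> norm y = 1 \<longrightarrow>
            (\<forall>j<i. x \<bullet> u j = 0 \<and> y \<bullet> v j = 0) \<longrightarrow> \<bar>x \<bullet> y\<bar> \<le> \<bar>u i \<bullet> v i\<bar>))"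

definition principal_angle :: "(nat \<Rightarrow> 'a::euclidean_space) \<Rightarrow> (nat \<Rightarrow> 'a) \<Rightarrow> nat \<Rightarrow> real" where
  "principal_angle u v i = arccos \<bar>u i \<bullet> v i\<bar>"

definition max0 :: "real set \<Rightarrow> real" where
  "max0 A = (if A = {} then 0 else Max A)"

definition singular_value :: "real^'d^'n \<Rightarrow> real \<Rightarrow> bool" where
  "singular_value X \<sigma> \<longleftrightarrow> \<sigma> \<ge> 0 \<and> (\<exists>x. x \<noteq> 0 \<and> (transpose X ** X) *v x = (\<sigma>\<^sup>2) *s x)"

end

theory Submission
  imports Defs
begin

text \<open>Let P_1, P_2 be the projections onto the kernels and w* the minimum-norm solution. After n
  cycles the iterate is w* - (P_2 P_1)^n w*, so the forgetting after k = 2n steps is half the squared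
  residual of the first task, which is at most half of |(I - P_1)(P_2 P_1)^n w*|^2 when |X_1| <= 1,
  with equality when the non-zero singular values of X_1 are 1. With y = M^(n-1) P_1 w* for the
  compression M = P_1 P_2 P_1 this equals y.My - |My|^2, which in an orthonormal eigenbasis of M is a
  combination of the weights mu^(2n-1) (1 - mu) with coefficients summing to at most |w*|^2 <= 1.
  Every eigenvalue mu of M in (0,1) is a squared principal cosine, which gives the bound; it is
  attained at the unit vector of span{u_i, v_i} orthogonal to u_i, on which one cycle acts by the
  factor cos theta_i.\<close>

section \<open>Orthogonal projections\<close>

definition orth_proj :: "'a::euclidean_space set \<Rightarrow> 'a \<Rightarrow> 'a" where
  "orth_proj S x = (SOME y. y \<in> span S \<and> (\<forall>w\<in>span S. (x - y) \<bullet> w = 0))"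

definition orth_rej :: "'a::euclidean_space set \<Rightarrow> 'a \<Rightarrow> 'a" where
  "orth_rej S x = x - orth_proj S x"

lemma orth_proj_in_span: "orth_proj S x \<in> span S"
  and orth_proj_orthogonal: "w \<in> span S \<Longrightarrow> (x - orth_proj S x) \<bullet> w = 0"
proof -
  obtain y z where "y \<in> span S" "\<And>w. w \<in> span S \<Longrightarrow> orthogonal z w" "x = y + z"
    using orthogonal_subspace_decomp_exists by metis
  then have "\<exists>y. y \<in> span S \<and> (\<forall>w\<in>span S. (x - y) \<bullet> w = 0)"
    by (auto simp: orthogonal_def)
  then have "orth_proj S x \<in> span S \<and> (\<forall>w\<in>span S. (x - orth_proj S x) \<bullet> w = 0)"
    unfolding orth_proj_def by (rule someI_ex)
  then show "orth_proj S x \<in> span S" "w \<in> span S \<Longrightarrow> (x - orth_proj S x) \<bullet> w = 0"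
    by auto
qed

lemma orth_proj_in_subspace: "subspace S \<Longrightarrow> orth_proj S x \<in> S"
  using orth_proj_in_span span_eq_iff by blast

lemma orth_proj_unique:
  assumes "y \<in> span S" "\<And>w. w \<in> span S \<Longrightarrow> (x - y) \<bullet> w = 0"
  shows "orth_proj S x = y"
proof -
  have d: "orth_proj S x - y \<in> span S"
    using orth_proj_in_span assms(1) span_diff by blast
  have "orth_proj S x - y = (x - y) - (x - orth_proj S x)" by simp
  then have "(orth_proj S x - y) \<bullet> (orth_proj S x - y) = 0"
    using assms(2)[OF d] orth_proj_orthogonal[OF d] by (metis diff_self inner_diff_left)
  then show ?thesis by simp
qed

lemma orth_proj_id: "x \<in> span S \<Longrightarrow> orth_proj S x = x"
  by (rule orth_proj_unique) auto

lemma orth_proj_eq_0: "(\<And>w. w \<in> span S \<Longrightarrow> x \<bullet> w = 0) \<Longrightarrow> orth_proj S x = 0"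
  by (rule orth_proj_unique) (auto simp: span_zero)

lemma orth_proj_idem [simp]: "orth_proj S (orth_proj S x) = orth_proj S x"
  by (rule orth_proj_id[OF orth_proj_in_span])

lemma linear_orth_proj: "linear (orth_proj S)"
proof (rule linearI)
  fix x y
  show "orth_proj S (x + y) = orth_proj S x + orth_proj S y"
    using orth_proj_orthogonal[of _ S x] orth_proj_orthogonal[of _ S y]
    by (intro orth_proj_unique span_add orth_proj_in_span)
       (simp add: algebra_simps inner_diff_left inner_add_left)
next
  fix c x
  show "orth_proj S (c *\<^sub>R x) = c *\<^sub>R orth_proj S x"
    using orth_proj_orthogonal[of _ S x]
    by (intro orth_proj_unique span_scale orth_proj_in_span)
       (simp add: inner_diff_left flip: scaleR_diff_right)
qed

lemmas orth_proj_zero [simp] = linear_0[OF linear_orth_proj]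
  and orth_proj_diff = linear_diff[OF linear_orth_proj]
  and orth_proj_scale = linear_scale[OF linear_orth_proj]

lemma orth_proj_inner_in_span: "w \<in> span S \<Longrightarrow> orth_proj S x \<bullet> w = x \<bullet> w"
  using orth_proj_orthogonal[of w S x] by (simp add: inner_diff_left)

lemma orth_proj_self_adjoint: "orth_proj S x \<bullet> y = x \<bullet> orth_proj S y"
  using orth_proj_inner_in_span[OF orth_proj_in_span, of S y x]
    orth_proj_inner_in_span[OF orth_proj_in_span, of S x y]
  by (simp add: inner_commute)

lemma norm_orth_proj_sq: "(norm x)\<^sup>2 = (norm (orth_proj S x))\<^sup>2 + (norm (orth_rej S x))\<^sup>2"
proof -
  have "orthogonal (orth_rej S x) (orth_proj S x)"
    unfolding orth_rej_def orthogonal_def by (rule orth_proj_orthogonal[OF orth_proj_in_span])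
  then have "(norm (orth_rej S x + orth_proj S x))\<^sup>2 = (norm (orth_rej S x))\<^sup>2 + (norm (orth_proj S x))\<^sup>2"
    by (rule norm_add_Pythagorean)
  then show ?thesis by (simp add: orth_rej_def)
qed

lemma norm_orth_proj_le: "norm (orth_proj S x) \<le> norm x"
  and norm_orth_rej_le: "norm (orth_rej S x) \<le> norm x"
  using norm_orth_proj_sq[of x S] by (auto intro: power2_le_imp_le)

lemma linear_orth_rej: "linear (orth_rej S)"
  unfolding orth_rej_def[abs_def] by (intro linear_compose_sub linear_ident linear_orth_proj)

lemma orth_proj_orth_rej [simp]: "orth_proj S (orth_rej S x) = 0"
  by (simp add: orth_rej_def linear_diff[OF linear_orth_proj])

lemma orth_rej_idem [simp]: "orth_rej S (orth_rej S x) = orth_rej S x"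
  by (simp add: orth_rej_def[of S "orth_rej S x"])

lemma orth_rej_self_adjoint: "orth_rej S x \<bullet> y = x \<bullet> orth_rej S y"
  by (simp add: orth_rej_def inner_diff_left inner_diff_right orth_proj_self_adjoint)

lemma inner_orth_rej_self: "x \<bullet> orth_rej S x = (norm (orth_rej S x))\<^sup>2"
  using orth_rej_self_adjoint[of S x "orth_rej S x"] by (simp add: dot_square_norm)

section \<open>Spectral theorem for self-adjoint maps\<close>

definition self_adjoint :: "('a::euclidean_space \<Rightarrow> 'a) \<Rightarrow> bool" where
  "self_adjoint f \<longleftrightarrow> linear f \<and> (\<forall>x y. f x \<bullet> y = x \<bullet> f y)"

lemma quadratic_nonpos_imp_linear_coeff_0:
  fixes a c :: real
  assumes "\<And>t. 2 * t * a + t\<^sup>2 * c \<le> 0"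
  shows "a = 0"
proof -
  define s where "s = \<bar>c\<bar> + 1"
  have s: "s > 0" "2 * s + c > 0" unfolding s_def by auto
  have "2 * (a / s) * a + (a / s)\<^sup>2 * c \<le> 0" by (rule assms)
  then have "a\<^sup>2 * (2 * s + c) / s\<^sup>2 \<le> 0"
    using s(1) by (simp add: field_simps power2_eq_square)
  then have "a\<^sup>2 * (2 * s + c) \<le> 0" using s(1) by (simp add: divide_le_0_iff)
  then show ?thesis using s(2) by (simp add: mult_le_0_iff)
qed

text \<open>A maximiser of the Rayleigh quotient on an invariant subspace is an eigenvector: along any
  direction y orthogonal to it the quotient is stationary, so f e has no component along y.\<close>
lemma rayleigh_maximiser_eigenvector:
  fixes f :: "'a::euclidean_space \<Rightarrow> 'a"
  assumes sa: "self_adjoint f" and S: "subspace S" and inv: "\<And>x. x \<in> S \<Longrightarrow> f x \<in> S"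
    and eS: "e \<in> S" and en: "norm e = 1"
    and max: "\<And>z. z \<in> S \<Longrightarrow> f z \<bullet> z \<le> (f e \<bullet> e) * (z \<bullet> z)"
  shows "f e = (f e \<bullet> e) *\<^sub>R e"
proof -
  have lin: "linear f" and sym: "\<And>x y. f x \<bullet> y = x \<bullet> f y"
    using sa unfolding self_adjoint_def by auto
  define m where "m = f e \<bullet> e"
  have ee: "e \<bullet> e = 1" using en by (simp add: norm_eq_1)
  have stationary: "f e \<bullet> y = 0" if y: "y \<in> S" "y \<bullet> e = 0" for y
  proof (rule quadratic_nonpos_imp_linear_coeff_0)
    fix t
    have "e + t *\<^sub>R y \<in> S" using eS y(1) S by (simp add: subspace_add subspace_scale)
    moreover have "f (e + t *\<^sub>R y) \<bullet> (e + t *\<^sub>R y) = m + 2 * t * (f e \<bullet> y) + t\<^sup>2 * (f y \<bullet> y)"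
      using sym[of y e] unfolding m_def
      by (simp add: linear_add[OF lin] linear_scale[OF lin] inner_add_left inner_add_right
          power2_eq_square inner_commute algebra_simps)
    moreover have "(e + t *\<^sub>R y) \<bullet> (e + t *\<^sub>R y) = 1 + t\<^sup>2 * (y \<bullet> y)"
      using ee y(2) by (simp add: inner_add_left inner_add_right power2_eq_square inner_commute)
    ultimately have "m + 2 * t * (f e \<bullet> y) + t\<^sup>2 * (f y \<bullet> y) \<le> m * (1 + t\<^sup>2 * (y \<bullet> y))"
      using max unfolding m_def[symmetric] by metis
    then show "2 * t * (f e \<bullet> y) + t\<^sup>2 * (f y \<bullet> y - m * (y \<bullet> y)) \<le> 0"
      by (simp add: algebra_simps)
  qed
  define d where "d = f e - m *\<^sub>R e"
  have dS: "d \<in> S" unfolding d_def using inv[OF eS] eS S by (simp add: subspace_diff subspace_scale)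
  have de: "d \<bullet> e = 0" unfolding d_def m_def using ee by (simp add: inner_diff_left)
  have "d \<bullet> d = f e \<bullet> d - m * (e \<bullet> d)" unfolding d_def by (simp add: inner_diff_left)
  also have "\<dots> = 0" using stationary[OF dS de] de by (simp add: inner_commute)
  finally show ?thesis unfolding d_def m_def by simp
qed

lemma self_adjoint_eigenvector_in_subspace:
  fixes f :: "'a::euclidean_space \<Rightarrow> 'a"
  assumes sa: "self_adjoint f" and S: "subspace S" and inv: "\<And>x. x \<in> S \<Longrightarrow> f x \<in> S"
    and ne: "S \<noteq> {0}"
  obtains e where "e \<in> S" "norm e = 1" "f e = (f e \<bullet> e) *\<^sub>R e"
proof -
  have lin: "linear f" using sa unfolding self_adjoint_def by auto
  define K where "K = S \<inter> sphere 0 1"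
  have "compact K" unfolding K_def using closed_subspace[OF S] compact_sphere by blast
  moreover have "K \<noteq> {}"
  proof -
    obtain x where x: "x \<in> S" "x \<noteq> 0" using ne subspace_0[OF S] by blast
    then have "(1 / norm x) *\<^sub>R x \<in> K" unfolding K_def using S by (simp add: subspace_scale)
    then show ?thesis by blast
  qed
  moreover have "continuous_on K (\<lambda>x. f x \<bullet> x)"
    using linear_continuous_on[of f K] lin
    by (intro continuous_intros) (auto simp: linear_conv_bounded_linear)
  ultimately obtain e where e: "e \<in> K" and emax: "\<And>y. y \<in> K \<Longrightarrow> f y \<bullet> y \<le> f e \<bullet> e"
    using continuous_attains_sup[of K "\<lambda>x. f x \<bullet> x"] by blast
  have eS: "e \<in> S" and en: "norm e = 1" using e unfolding K_def by auto
  have "f z \<bullet> z \<le> (f e \<bullet> e) * (z \<bullet> z)" if z: "z \<in> S" for z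
  proof (cases "z = 0")
    case True then show ?thesis by (simp add: linear_0[OF lin])
  next
    case False
    define c where "c = 1 / norm z"
    have "c *\<^sub>R z \<in> K" unfolding K_def c_def using z S False by (simp add: subspace_scale)
    then have "f (c *\<^sub>R z) \<bullet> (c *\<^sub>R z) \<le> f e \<bullet> e" by (rule emax)
    then have "c\<^sup>2 * (f z \<bullet> z) \<le> f e \<bullet> e"
      by (simp add: linear_scale[OF lin] power2_eq_square)
    moreover have "c\<^sup>2 * (z \<bullet> z) = 1" "c\<^sup>2 > 0"
      unfolding c_def using False by (simp_all add: dot_square_norm power_divide)
    ultimately have "c\<^sup>2 * (f z \<bullet> z) \<le> (f e \<bullet> e) * (c\<^sup>2 * (z \<bullet> z))"
      by simp
    then have "c\<^sup>2 * (f z \<bullet> z) \<le> c\<^sup>2 * ((f e \<bullet> e) * (z \<bullet> z))"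
      by (simp only: mult.left_commute)
    then show ?thesis using \<open>c\<^sup>2 > 0\<close> by (rule mult_left_le_imp_le)
  qed
  then show ?thesis using that eS en rayleigh_maximiser_eigenvector[OF sa S inv eS en] by blast
qed

lemma span_insert_eq_subspace:
  assumes S: "subspace S" and eS: "e \<in> S" and ee: "e \<bullet> e = 1"
    and E: "span E = {x \<in> S. x \<bullet> e = 0}"
  shows "span (insert e E) = S"
proof
  have "insert e E \<subseteq> S" using eS E span_superset[of E] by auto
  then show "span (insert e E) \<subseteq> S" using S by (rule span_minimal)
  show "S \<subseteq> span (insert e E)"
  proof
    fix x assume x: "x \<in> S"
    have "x - (x \<bullet> e) *\<^sub>R e \<in> span E" unfolding E using x eS S ee
      by (simp add: subspace_diff subspace_scale inner_diff_left)
    then show "x \<in> span (insert e E)" unfolding span_insert by auto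
  qed
qed

lemma self_adjoint_orthonormal_eigenbasis_subspace:
  fixes f :: "'a::euclidean_space \<Rightarrow> 'a"
  assumes sa: "self_adjoint f"
  shows "subspace S \<Longrightarrow> (\<And>x. x \<in> S \<Longrightarrow> f x \<in> S) \<Longrightarrow>
    \<exists>E. finite E \<and> E \<subseteq> S \<and> (\<forall>e\<in>E. norm e = 1 \<and> f e = (f e \<bullet> e) *\<^sub>R e)
       \<and> pairwise orthogonal E \<and> span E = S"
proof (induction "dim S" arbitrary: S rule: less_induct)
  case (less S)
  have sym: "\<And>x y. f x \<bullet> y = x \<bullet> f y" using sa unfolding self_adjoint_def by auto
  show ?case
  proof (cases "S = {0}")
    case True
    then show ?thesis by (intro exI[of _ "{}"]) auto
  next
    case False
    obtain e where eS: "e \<in> S" and en: "norm e = 1" and fe: "f e = (f e \<bullet> e) *\<^sub>R e"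
      using self_adjoint_eigenvector_in_subspace[OF sa less.prems False] by blast
    have ee: "e \<bullet> e = 1" using en by (simp add: norm_eq_1)
    define S' where "S' = {x \<in> S. x \<bullet> e = 0}"
    have sub': "subspace S'" unfolding S'_def using less.prems(1)
      by (auto simp: subspace_def inner_add_left)
    have inv': "f x \<in> S'" if "x \<in> S'" for x
    proof -
      have "f x \<bullet> e = (f e \<bullet> e) * (x \<bullet> e)" by (subst sym, subst fe) simp
      then show ?thesis using that less.prems(2) unfolding S'_def by auto
    qed
    have "e \<notin> S'" using ee unfolding S'_def by auto
    then have "S' \<subset> S" using eS unfolding S'_def by blast
    then have "dim S' < dim S"
      using dim_psubset sub' less.prems(1) by (metis span_eq_iff)
    then obtain E where E: "finite E" "E \<subseteq> S'" "\<forall>e\<in>E. norm e = 1 \<and> f e = (f e \<bullet> e) *\<^sub>R e"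
      "pairwise orthogonal E" "span E = S'"
      using less.hyps[OF _ sub' inv'] by blast
    show ?thesis
    proof (intro exI[of _ "insert e E"] conjI)
      show "finite (insert e E)" "insert e E \<subseteq> S"
        "\<forall>x\<in>insert e E. norm x = 1 \<and> f x = (f x \<bullet> x) *\<^sub>R x"
        using E(1-3) eS en fe unfolding S'_def by auto
      show "pairwise orthogonal (insert e E)"
        using E(2,4) unfolding S'_def
        by (auto simp: pairwise_insert orthogonal_def inner_commute)
      show "span (insert e E) = S"
        using span_insert_eq_subspace[OF less.prems(1) eS ee] E(5) unfolding S'_def by blast
    qed
  qed
qed

lemma self_adjoint_orthonormal_eigenbasis:
  fixes f :: "'a::euclidean_space \<Rightarrow> 'a"
  assumes "self_adjoint f"
  obtains E where "finite E" "\<And>e. e \<in> E \<Longrightarrow> norm e = 1" "pairwise orthogonal E" "span E = UNIV"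
    "\<And>e. e \<in> E \<Longrightarrow> f e = (f e \<bullet> e) *\<^sub>R e"
  using self_adjoint_orthonormal_eigenbasis_subspace[OF assms, of UNIV] by auto

lemma orthonormal_basis_inner:
  fixes x y :: "'a::euclidean_space"
  assumes "finite E" "\<And>e. e \<in> E \<Longrightarrow> norm e = 1" "pairwise orthogonal E" "span E = UNIV"
  shows "x \<bullet> y = (\<Sum>e\<in>E. (x \<bullet> e) * (y \<bullet> e))"
proof -
  have "x \<bullet> y = x \<bullet> (\<Sum>e\<in>E. (y \<bullet> e) *\<^sub>R e)" using orthonormal_basis_expand[of E y] assms by simp
  then show ?thesis by (simp add: inner_sum_right mult.commute)
qed

section \<open>Row spaces and the pseudo-inverse\<close>

lemma inner_matrix_vector_transpose: "(X *v z) \<bullet> y = z \<bullet> (transpose X *v y)"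
  for X :: "real^'d^'n"
  by (metis dot_lmul_matrix inner_commute transpose_matrix_vector)

lemma subspace_rowspace: "subspace (rowspace X)"
  unfolding rowspace_def by (rule linear_subspace_image) (auto intro: subspace_UNIV)

lemma span_rowspace [simp]: "span (rowspace X) = rowspace X"
  using subspace_rowspace span_eq_iff by blast

lemma span_range_matrix_vector_mult [simp]:
  "span (range (\<lambda>z. (X::real^'d^'n) *v z)) = range (\<lambda>z. X *v z)"
  by (simp add: span_eq_iff linear_subspace_image subspace_UNIV)

lemma matrix_vector_mult_eq_0_iff_orthogonal_rowspace:
  fixes X :: "real^'d^'n"
  shows "X *v z = 0 \<longleftrightarrow> (\<forall>w\<in>rowspace X. z \<bullet> w = 0)"
proof
  assume "X *v z = 0"
  then show "\<forall>w\<in>rowspace X. z \<bullet> w = 0"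
    unfolding rowspace_def using inner_matrix_vector_transpose[of X z] by auto
next
  assume "\<forall>w\<in>rowspace X. z \<bullet> w = 0"
  then have "(X *v z) \<bullet> (X *v z) = 0"
    unfolding rowspace_def inner_matrix_vector_transpose by auto
  then show "X *v z = 0" by simp
qed

lemma matrix_vector_mult_orth_proj:
  assumes "rowspace X \<subseteq> span S"
  shows "X *v orth_proj S z = X *v z"
proof -
  have "X *v (z - orth_proj S z) = 0"
    unfolding matrix_vector_mult_eq_0_iff_orthogonal_rowspace
    using orth_proj_orthogonal assms by blast
  then show ?thesis by (simp add: matrix_vector_mult_diff_distrib)
qed

lemma matrix_vector_mult_orth_proj_rowspace [simp]: "X *v orth_proj (rowspace X) z = X *v z"
  by (rule matrix_vector_mult_orth_proj) simp

lemma matrix_vector_mult_inj_on_rowspace: "inj_on (\<lambda>x. X *v x) (rowspace X)"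
proof (rule inj_onI)
  fix x x' assume x: "x \<in> rowspace X" "x' \<in> rowspace X" and "X *v x = X *v x'"
  then have "X *v (x - x') = 0" by (simp add: matrix_vector_mult_diff_distrib)
  then have "orth_proj (rowspace X) (x - x') = 0"
    by (intro orth_proj_eq_0) (simp add: matrix_vector_mult_eq_0_iff_orthogonal_rowspace)
  moreover have "orth_proj (rowspace X) (x - x') = x - x'"
    using x by (intro orth_proj_id) (simp add: subspace_diff[OF subspace_rowspace])
  ultimately show "x = x'" by simp
qed

definition pinv_map :: "real^'d^'n \<Rightarrow> real^'n \<Rightarrow> real^'d" where
  "pinv_map X y = (THE x. x \<in> rowspace X \<and> X *v x = orth_proj (range (\<lambda>z. X *v z)) y)"

lemma pinv_map:
  "pinv_map X y \<in> rowspace X" "X *v pinv_map X y = orth_proj (range (\<lambda>z. X *v z)) y"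
proof -
  obtain z where z: "X *v z = orth_proj (range (\<lambda>z. X *v z)) y"
    using orth_proj_in_span[of "range (\<lambda>z. X *v z)" y] by auto
  have "\<exists>!x. x \<in> rowspace X \<and> X *v x = orth_proj (range (\<lambda>z. X *v z)) y"
  proof (rule ex_ex1I)
    show "\<exists>x. x \<in> rowspace X \<and> X *v x = orth_proj (range (\<lambda>z. X *v z)) y"
      using z orth_proj_in_span[of "rowspace X" z] by auto
  next
    fix x x' assume "x \<in> rowspace X \<and> X *v x = orth_proj (range (\<lambda>z. X *v z)) y"
      and "x' \<in> rowspace X \<and> X *v x' = orth_proj (range (\<lambda>z. X *v z)) y"
    then show "x = x'" using inj_onD[OF matrix_vector_mult_inj_on_rowspace] by metis
  qed
  then have "pinv_map X y \<in> rowspace X \<and> X *v pinv_map X y = orth_proj (range (\<lambda>z. X *v z)) y"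
    unfolding pinv_map_def by (rule theI')
  then show "pinv_map X y \<in> rowspace X" "X *v pinv_map X y = orth_proj (range (\<lambda>z. X *v z)) y"
    by auto
qed

lemma pinv_map_eqI:
  "x \<in> rowspace X \<Longrightarrow> X *v x = orth_proj (range (\<lambda>z. X *v z)) y \<Longrightarrow> pinv_map X y = x"
  using matrix_vector_mult_inj_on_rowspace pinv_map by (metis inj_onD)

lemma linear_pinv_map: "linear (pinv_map X)"
proof (rule linearI)
  fix a b
  show "pinv_map X (a + b) = pinv_map X a + pinv_map X b"
    by (rule pinv_map_eqI) (simp_all add: pinv_map linear_add[OF linear_orth_proj]
        matrix_vector_right_distrib subspace_add[OF subspace_rowspace])
next
  fix c a
  show "pinv_map X (c *\<^sub>R a) = c *\<^sub>R pinv_map X a"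
    by (rule pinv_map_eqI) (simp_all add: pinv_map linear_scale[OF linear_orth_proj]
        matrix_vector_mult_scaleR subspace_scale[OF subspace_rowspace])
qed

lemma pinv_map_matrix_vector_mult: "pinv_map X (X *v z) = orth_proj (rowspace X) z"
  by (rule pinv_map_eqI) (simp_all add: orth_proj_in_span[of "rowspace X", simplified] orth_proj_id)

lemma transpose_eq_self_if_self_adjoint:
  fixes A :: "real^'n^'n"
  assumes "\<And>x y. (A *v x) \<bullet> y = x \<bullet> (A *v y)"
  shows "transpose A = A"
proof -
  have "y \<bullet> (transpose A *v x) = y \<bullet> (A *v x)" for x y
    using assms[of y x] inner_matrix_vector_transpose[of A y x] by metis
  then have "transpose A *v x = A *v x" for x
    by (metis vector_eq_ldot)
  then show ?thesis by (simp add: matrix_eq)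
qed

lemma penrose_conditions_unique:
  fixes A :: "real^'d^'n" and B C :: "real^'n^'d"
  assumes B1: "A ** B ** A = A" and B2: "B ** A ** B = B"
    and B3: "transpose (A ** B) = A ** B" and B4: "transpose (B ** A) = B ** A"
    and C1: "A ** C ** A = A" and C2: "C ** A ** C = C"
    and C3: "transpose (A ** C) = A ** C" and C4: "transpose (C ** A) = C ** A"
  shows "B = C"
proof -
  have "B = B ** transpose (A ** B)" using B2 B3 by (simp add: matrix_mul_assoc)
  also have "\<dots> = B ** transpose (A ** C ** A ** B)" using C1 by simp
  also have "\<dots> = B ** transpose (A ** B) ** transpose (A ** C)"
    by (simp add: matrix_transpose_mul matrix_mul_assoc)
  also have "\<dots> = B ** A ** C" using B2 B3 C3 by (simp add: matrix_mul_assoc)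
  finally have b: "B = B ** A ** C" .
  have "C = transpose (C ** A) ** C" using C2 C4 by simp
  also have "\<dots> = transpose (C ** A ** B ** A) ** C" using B1 by (metis matrix_mul_assoc)
  also have "\<dots> = transpose (B ** A) ** transpose (C ** A) ** C"
    by (simp add: matrix_transpose_mul matrix_mul_assoc)
  also have "\<dots> = B ** A ** C" using C2 by (simp add: B4 C4) (metis matrix_mul_assoc)
  finally show ?thesis using b by simp
qed

lemma pinv_eq_matrix_pinv_map: "pinv X = matrix (pinv_map X)"
proof -
  let ?B = "matrix (pinv_map X)"
  have B: "?B *v y = pinv_map X y" for y
    using matrix_vector_mul(2)[OF linear_pinv_map] by metis
  have P1: "X ** ?B ** X = X"
    by (simp add: matrix_eq matrix_vector_mul_assoc[symmetric] B pinv_map_matrix_vector_mult)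
  have P2: "?B ** X ** ?B = ?B"
    by (simp add: matrix_eq matrix_vector_mul_assoc[symmetric] B pinv_map_matrix_vector_mult
        orth_proj_id pinv_map(1))
  have P3: "transpose (X ** ?B) = X ** ?B"
    by (rule transpose_eq_self_if_self_adjoint)
       (simp add: matrix_vector_mul_assoc[symmetric] B pinv_map(2) orth_proj_self_adjoint)
  have P4: "transpose (?B ** X) = ?B ** X"
    by (rule transpose_eq_self_if_self_adjoint)
       (simp add: matrix_vector_mul_assoc[symmetric] B pinv_map_matrix_vector_mult orth_proj_self_adjoint)
  show ?thesis unfolding pinv_def
    by (rule the_equality) (use P1 P2 P3 P4 penrose_conditions_unique[OF _ _ _ _ P1 P2 P3 P4] in blast)+
qed

lemma pinv_matrix_vector_mult: "pinv X *v (X *v z) = orth_proj (rowspace X) z"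
  using matrix_vector_mul(2)[OF linear_pinv_map]
  by (metis pinv_eq_matrix_pinv_map pinv_map_matrix_vector_mult)

lemma kerproj_apply: "kerproj X *v z = orth_rej (rowspace X) z"
  by (simp add: kerproj_def orth_rej_def matrix_vector_mult_diff_rdistrib
      flip: matrix_vector_mul_assoc pinv_matrix_vector_mult)

lemma one_minus_kerproj_apply: "(mat 1 - kerproj X) *v z = orth_proj (rowspace X) z"
  by (simp add: matrix_vector_mult_diff_rdistrib kerproj_apply orth_rej_def)

section \<open>Cyclic iterates and the minimum-norm solution\<close>

abbreviation kerproj_cycle :: "real^'d^'n1 \<Rightarrow> real^'d^'n2 \<Rightarrow> real^'d \<Rightarrow> real^'d" where
  "kerproj_cycle X1 X2 \<equiv> (\<lambda>x. kerproj X2 *v (kerproj X1 *v x))"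

lemma kerproj_cycle_eq_orth_rej:
  "kerproj_cycle X1 X2 = (\<lambda>x. orth_rej (rowspace X2) (orth_rej (rowspace X1) x))"
  by (simp add: kerproj_apply)

lemma kerproj_cycle_power_zero: "(kerproj_cycle X1 X2 ^^ m) 0 = 0"
  by (induction m) simp_all

lemma tau2_odd: "tau2 (Suc (2 * m)) = 1"
  and tau2_even: "tau2 (Suc (Suc (2 * m))) = 2"
  unfolding tau2_def by (simp_all add: mod_Suc)

lemma pinv_step_from_solution:
  assumes "X *v z = y"
  shows "(z - e) + pinv X *v (y - X *v (z - e)) = z - kerproj X *v e"
proof -
  have "y - X *v (z - e) = X *v e" using assms by (simp add: matrix_vector_mult_diff_distrib)
  then show ?thesis by (simp add: pinv_matrix_vector_mult kerproj_apply orth_rej_def)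
qed

lemma cyc_iter_even:
  assumes z1: "X1 *v z = y1" and z2: "X2 *v z = y2"
  shows "cyc_iter X1 y1 X2 y2 (2 * m) = z - (kerproj_cycle X1 X2 ^^ m) z"
proof (induction m)
  case 0
  then show ?case by simp
next
  case (Suc m)
  define e where "e = (kerproj_cycle X1 X2 ^^ m) z"
  have "cyc_iter X1 y1 X2 y2 (Suc (2 * m)) = z - kerproj X1 *v e"
    using Suc.IH pinv_step_from_solution[OF z1, of e] by (simp add: tau2_odd Let_def e_def)
  then have "cyc_iter X1 y1 X2 y2 (Suc (Suc (2 * m))) = z - kerproj X2 *v (kerproj X1 *v e)"
    using pinv_step_from_solution[OF z2, of "kerproj X1 *v e"] by (simp add: tau2_even Let_def)
  then show ?case by (simp add: e_def)
qed

lemma sum_tau2_alternating: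
  "(\<Sum>t\<in>{1..2*n}. (if tau2 t = 1 then a else b)) = real n * a + real n * b"
proof (induction n)
  case 0
  then show ?case by simp
next
  case (Suc n)
  have "{1..2 * Suc n} = insert (Suc (2*n)) (insert (Suc (Suc (2*n))) {1..2*n})" by auto
  then have "(\<Sum>t\<in>{1..2*Suc n}. (if tau2 t = 1 then a else b))
     = (if tau2 (Suc (2*n)) = 1 then a else b) + (if tau2 (Suc (Suc (2*n))) = 1 then a else b)
       + (\<Sum>t\<in>{1..2*n}. (if tau2 t = 1 then a else b))"
    by simp
  then show ?case using Suc.IH by (simp only: tau2_odd tau2_even) (simp add: algebra_simps)
qed

lemma forgetting_even:
  assumes z1: "X1 *v z = y1" and z2: "X2 *v z = y2" and n: "n \<ge> 1"
  shows "forgetting X1 y1 X2 y2 (2 * n) = (1/2) * (norm (X1 *v (kerproj_cycle X1 X2 ^^ n) z))\<^sup>2"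
proof -
  define e where "e = (kerproj_cycle X1 X2 ^^ n) z"
  have w: "cyc_iter X1 y1 X2 y2 (2 * n) = z - e"
    unfolding e_def by (rule cyc_iter_even[OF z1 z2])
  have r1: "norm (X1 *v (z - e) - y1) = norm (X1 *v e)"
    using z1 by (simp add: matrix_vector_mult_diff_distrib norm_minus_commute)
  obtain m where m: "n = Suc m" using n by (cases n) auto
  have "X2 *v (kerproj X2 *v x) = 0" for x
    by (simp add: kerproj_apply orth_rej_def matrix_vector_mult_diff_distrib)
  then have r2: "X2 *v (z - e) - y2 = 0"
    using z2 unfolding e_def m by (simp add: matrix_vector_mult_diff_distrib)
  have "forgetting X1 y1 X2 y2 (2 * n) =
      (1 / real (2 * n)) * (real n * (norm (X1 *v e))\<^sup>2 + real n * 0)"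
    unfolding forgetting_def Let_def w r1 r2 norm_zero zero_power2 sum_tau2_alternating ..
  then show ?thesis using n by (simp add: e_def)
qed

lemma min_norm_sol_eqI:
  assumes g: "g \<in> span (rowspace X1 \<union> rowspace X2)" and g1: "X1 *v g = y1" and g2: "X2 *v g = y2"
  shows "min_norm_sol X1 y1 X2 y2 = g"
proof -
  have pyth: "(norm v)\<^sup>2 = (norm g)\<^sup>2 + (norm (v - g))\<^sup>2" if "X1 *v v = y1" "X2 *v v = y2" for v
  proof -
    have "X1 *v (v - g) = 0" "X2 *v (v - g) = 0"
      using that g1 g2 by (simp_all add: matrix_vector_mult_diff_distrib)
    then have "\<forall>w\<in>rowspace X1 \<union> rowspace X2. orthogonal (v - g) w"
      by (auto simp: matrix_vector_mult_eq_0_iff_orthogonal_rowspace orthogonal_def)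
    then have "orthogonal (v - g) g" by (intro orthogonal_to_span[OF g]) blast
    then have "(norm ((v - g) + g))\<^sup>2 = (norm (v - g))\<^sup>2 + (norm g)\<^sup>2"
      by (rule norm_add_Pythagorean)
    then show ?thesis by simp
  qed
  have min: "norm g \<le> norm v" if "X1 *v v = y1" "X2 *v v = y2" for v
  proof (rule power2_le_imp_le)
    show "(norm g)\<^sup>2 \<le> (norm v)\<^sup>2" using pyth[OF that] by simp
  qed simp
  show ?thesis unfolding min_norm_sol_def
  proof (rule the_equality)
    show "(X1 *v g = y1 \<and> X2 *v g = y2) \<and> (\<forall>v. X1 *v v = y1 \<and> X2 *v v = y2 \<longrightarrow> norm g \<le> norm v)"
      using g1 g2 min by blast
  next
    fix w assume w: "(X1 *v w = y1 \<and> X2 *v w = y2) \<and> (\<forall>v. X1 *v v = y1 \<and> X2 *v v = y2 \<longrightarrow> norm w \<le> norm v)"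
    then have "norm w \<le> norm g" using g1 g2 by blast
    moreover have "norm g \<le> norm w" using w min by blast
    ultimately have "(norm (w - g))\<^sup>2 = 0" using pyth[of w] w by simp
    then show "w = g" by simp
  qed
qed

lemma matrix_vector_mult_orth_proj_rowspace_union:
  "X1 *v orth_proj (rowspace X1 \<union> rowspace X2) w = X1 *v w"
  "X2 *v orth_proj (rowspace X1 \<union> rowspace X2) w = X2 *v w"
  by (auto intro!: matrix_vector_mult_orth_proj span_base)

lemma min_norm_sol_eq_orth_proj:
  "X1 *v w = y1 \<Longrightarrow> X2 *v w = y2 \<Longrightarrow>
    min_norm_sol X1 y1 X2 y2 = orth_proj (rowspace X1 \<union> rowspace X2) w"
  by (intro min_norm_sol_eqI orth_proj_in_span) (auto simp: matrix_vector_mult_orth_proj_rowspace_union)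

section \<open>Principal vectors\<close>

lemma abs_inner_le_if_unit_bound:
  fixes S :: "'a::euclidean_space set"
  assumes S: "subspace S" and bound: "\<And>x. x \<in> S \<Longrightarrow> norm x = 1 \<Longrightarrow> \<bar>x \<bullet> v\<bar> \<le> m"
    and z: "z \<in> S"
  shows "\<bar>z \<bullet> v\<bar> \<le> m * norm z"
proof (cases "z = 0")
  case True then show ?thesis by simp
next
  case False
  have "\<bar>((1 / norm z) *\<^sub>R z) \<bullet> v\<bar> \<le> m"
    using False z S by (intro bound) (simp_all add: subspace_scale)
  then show ?thesis using False by (simp add: abs_mult divide_le_eq mult.commute)
qed

text \<open>Moving u inside S in a direction orthogonal to u cannot increase |u . v|, so the
  first-order term of the perturbation vanishes.\<close>
lemma inner_eq_if_correlation_maximiser: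
  fixes S :: "'a::euclidean_space set"
  assumes S: "subspace S" and uS: "u \<in> S" and un: "norm u = 1"
    and max: "\<And>x. x \<in> S \<Longrightarrow> norm x = 1 \<Longrightarrow> \<bar>x \<bullet> v\<bar> \<le> \<bar>u \<bullet> v\<bar>"
    and x: "x \<in> S"
  shows "x \<bullet> v = (u \<bullet> v) * (x \<bullet> u)"
proof -
  have uu: "u \<bullet> u = 1" using un by (simp add: norm_eq_1)
  define x' where "x' = x - (x \<bullet> u) *\<^sub>R u"
  have x'S: "x' \<in> S" unfolding x'_def using x uS S by (simp add: subspace_diff subspace_scale)
  have x'u: "x' \<bullet> u = 0" unfolding x'_def using uu by (simp add: inner_diff_left)
  define c where "c = u \<bullet> v"
  define a where "a = x' \<bullet> v"
  have "c * a = 0"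
  proof (rule quadratic_nonpos_imp_linear_coeff_0[where c = "a\<^sup>2 - c\<^sup>2 * (x' \<bullet> x')"])
    fix t :: real
    define z where "z = u + t *\<^sub>R x'"
    have zS: "z \<in> S" unfolding z_def using uS x'S S by (simp add: subspace_add subspace_scale)
    have zv: "z \<bullet> v = c + t * a" unfolding z_def c_def a_def by (simp add: inner_add_left)
    have zz: "z \<bullet> z = 1 + t\<^sup>2 * (x' \<bullet> x')" unfolding z_def using uu x'u
      by (simp add: inner_add_left inner_add_right inner_commute power2_eq_square)
    have "\<bar>z \<bullet> v\<bar> \<le> \<bar>c\<bar> * norm z" unfolding c_def by (rule abs_inner_le_if_unit_bound[OF S max zS])
    then have "(z \<bullet> v)\<^sup>2 \<le> (\<bar>c\<bar> * norm z)\<^sup>2"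
      by (metis abs_ge_zero power2_abs power_mono)
    then have "(c + t * a)\<^sup>2 \<le> c\<^sup>2 * (1 + t\<^sup>2 * (x' \<bullet> x'))"
      using zv zz by (simp add: power_mult_distrib dot_square_norm)
    then show "2 * t * (c * a) + t\<^sup>2 * (a\<^sup>2 - c\<^sup>2 * (x' \<bullet> x')) \<le> 0"
      by (simp add: power2_eq_square algebra_simps)
  qed
  moreover have "a = 0" if "c = 0"
    using abs_inner_le_if_unit_bound[OF S max x'S] that unfolding a_def c_def by simp
  ultimately have "a = 0" by auto
  have "x \<bullet> v = x' \<bullet> v + (x \<bullet> u) * (u \<bullet> v)"
    unfolding x'_def by (simp add: inner_diff_left)
  then show ?thesis using \<open>a = 0\<close> unfolding a_def by simp
qed

locale principal_vectors =
  fixes U V :: "'a::euclidean_space set" and u v :: "nat \<Rightarrow> 'a"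
  assumes subspace_U: "subspace U" and subspace_V: "subspace V"
    and principal: "principal_seq U V u v"
begin

abbreviation r where "r \<equiv> min (dim U) (dim V)"

lemma principal_vector:
  assumes "i < r"
  shows "u i \<in> U" "v i \<in> V" "norm (u i) = 1" "norm (v i) = 1"
    "\<And>j. j < i \<Longrightarrow> u i \<bullet> u j = 0" "\<And>j. j < i \<Longrightarrow> v i \<bullet> v j = 0"
    "\<And>x y. x \<in> U \<Longrightarrow> y \<in> V \<Longrightarrow> norm x = 1 \<Longrightarrow> norm y = 1 \<Longrightarrow>
        (\<forall>j<i. x \<bullet> u j = 0 \<and> y \<bullet> v j = 0) \<Longrightarrow> \<bar>x \<bullet> y\<bar> \<le> \<bar>u i \<bullet> v i\<bar>"
  using principal assms unfolding principal_seq_def by blast+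

lemma principal_vectors_swap: "principal_vectors V U v u"
  using principal subspace_U subspace_V unfolding principal_vectors_def principal_seq_def
  by (simp add: min.commute inner_commute) (metis inner_commute)

lemma inner_u_u: "i < r \<Longrightarrow> j < r \<Longrightarrow> u i \<bullet> u j = (if i = j then 1 else 0)"
  using principal_vector(3,5) by (metis inner_commute linorder_neqE_nat norm_eq_1)

lemma abs_inner_u_v_le_1: "i < r \<Longrightarrow> \<bar>u i \<bullet> v i\<bar> \<le> 1"
  using Cauchy_Schwarz_ineq2[of "u i" "v i"] principal_vector(3,4) by simp

lemma inner_v_eq:
  assumes i: "i < r" and x: "x \<in> U" and xu: "\<And>j. j < i \<Longrightarrow> x \<bullet> u j = 0"
  shows "x \<bullet> v i = (u i \<bullet> v i) * (x \<bullet> u i)"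
proof (rule inner_eq_if_correlation_maximiser)
  let ?S = "{x \<in> U. \<forall>j<i. x \<bullet> u j = 0}"
  show "subspace ?S" using subspace_U unfolding subspace_def by (auto simp: inner_add_left)
  show "u i \<in> ?S" "norm (u i) = 1" "x \<in> ?S" using principal_vector[OF i] x xu by auto
  show "\<bar>z \<bullet> v i\<bar> \<le> \<bar>u i \<bullet> v i\<bar>" if "z \<in> ?S" "norm z = 1" for z
    using that principal_vector[OF i] by auto
qed

lemma inner_u_eq:
  assumes "i < r" "y \<in> V" "\<And>j. j < i \<Longrightarrow> y \<bullet> v j = 0"
  shows "y \<bullet> u i = (u i \<bullet> v i) * (y \<bullet> v i)"
  using principal_vectors.inner_v_eq[OF principal_vectors_swap] assms
  by (simp add: min.commute inner_commute)

lemma inner_u_v_distinct: "i < r \<Longrightarrow> j < r \<Longrightarrow> i \<noteq> j \<Longrightarrow> u i \<bullet> v j = 0"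
proof -
  assume ij: "i < r" "j < r" "i \<noteq> j"
  then consider "j < i" | "i < j" by linarith
  then show ?thesis
  proof cases
    case 1
    then show ?thesis
      using inner_v_eq[OF ij(2) principal_vector(1)[OF ij(1)]] principal_vector(5)[OF ij(1)] by auto
  next
    case 2
    then show ?thesis
      using inner_u_eq[OF ij(1) principal_vector(2)[OF ij(2)]] principal_vector(6)[OF ij(2)]
      by (auto simp: inner_commute)
  qed
qed

text \<open>Split w into its components along u_0, ..., u_(i-1) and a remainder orthogonal to
  them; both parts meet v_i - (u_i . v_i) u_i orthogonally.\<close>
lemma orth_proj_U_v: assumes i: "i < r" shows "orth_proj U (v i) = (u i \<bullet> v i) *\<^sub>R u i"
proof (rule orth_proj_unique)
  show "(u i \<bullet> v i) *\<^sub>R u i \<in> span U"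
    using principal_vector(1)[OF i] by (simp add: span_scale span_base)
  fix w assume "w \<in> span U"
  then have w: "w \<in> U" using subspace_U by (metis span_eq_iff)
  define p where "p = (\<Sum>j<i. (w \<bullet> u j) *\<^sub>R u j)"
  have pU: "p \<in> U"
    unfolding p_def using principal_vector(1) i subspace_U by (intro subspace_sum subspace_scale) auto
  have "(w - p) \<bullet> u l = 0" if "l < i" for l
  proof -
    have "p \<bullet> u l = (\<Sum>j<i. if j = l then w \<bullet> u j else 0)"
      unfolding p_def inner_sum_left using that i by (intro sum.cong) (auto simp: inner_u_u)
    then show ?thesis using that by (simp add: inner_diff_left)
  qed
  then have "(w - p) \<bullet> v i = (u i \<bullet> v i) * ((w - p) \<bullet> u i)"
    using w pU subspace_U by (intro inner_v_eq[OF i]) (auto simp: subspace_diff)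
  moreover have "p \<bullet> v i = 0" "p \<bullet> u i = 0"
    unfolding p_def using i by (simp_all add: inner_sum_left inner_u_v_distinct inner_u_u)
  ultimately show "(v i - (u i \<bullet> v i) *\<^sub>R u i) \<bullet> w = 0"
    by (simp add: inner_diff_left inner_diff_right inner_commute algebra_simps)
qed

lemma orth_proj_V_u: "i < r \<Longrightarrow> orth_proj V (u i) = (u i \<bullet> v i) *\<^sub>R v i"
  using principal_vectors.orth_proj_U_v[OF principal_vectors_swap, of i]
  by (simp add: min.commute inner_commute)

lemma span_principal_vectors_U: assumes "r = dim U" shows "U \<subseteq> span (u ` {..<r})"
proof (rule card_ge_dim_independent)
  show "u ` {..<r} \<subseteq> U" using principal_vector(1) by auto
  have "0 \<notin> u ` {..<r}" using principal_vector(3) by fastforce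
  moreover have "pairwise orthogonal (u ` {..<r})"
    unfolding pairwise_def orthogonal_def using inner_u_u by auto
  ultimately show "independent (u ` {..<r})" using pairwise_orthogonal_independent by blast
  have "inj_on u {..<r}"
    unfolding inj_on_def using inner_u_u by (metis lessThan_iff zero_neq_one)
  then show "dim U \<le> card (u ` {..<r})" using assms by (simp add: card_image)
qed

text \<open>Every non-zero eigenvalue of the compression of P_U P_V to U is a squared principal
  cosine: an eigenvector a orthogonal to all u_j would, together with its image in V orthogonal
  to all v_j, contradict the fact that the principal vectors exhaust U or V.\<close>
lemma eigenvalue_orth_proj_orth_proj:
  assumes aU: "a \<in> U" and a0: "a \<noteq> 0" and ev: "orth_proj U (orth_proj V a) = \<mu> *\<^sub>R a"
    and \<mu>0: "\<mu> \<noteq> 0"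
  shows "\<exists>j<r. (u j \<bullet> v j)\<^sup>2 = \<mu>"
proof (rule ccontr)
  assume "\<not> ?thesis"
  then have ne: "\<And>j. j < r \<Longrightarrow> (u j \<bullet> v j)\<^sup>2 \<noteq> \<mu>" by auto
  have projU: "orth_proj U z \<bullet> w = z \<bullet> w" if "w \<in> U" for z w
    using that by (simp add: orth_proj_inner_in_span span_base)
  have projV: "orth_proj V z \<bullet> w = z \<bullet> w" if "w \<in> V" for z w
    using that by (simp add: orth_proj_inner_in_span span_base)
  have av: "a \<bullet> v j = (u j \<bullet> v j) * (a \<bullet> u j)" if j: "j < r" for j
    using projU[OF aU, of "v j"] orth_proj_U_v[OF j] by (simp add: inner_commute)
  have au: "a \<bullet> u j = 0" if j: "j < r" for j
  proof -
    have "\<mu> * (a \<bullet> u j) = orth_proj U (orth_proj V a) \<bullet> u j" using ev by simp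
    also have "\<dots> = a \<bullet> orth_proj V (u j)"
      using principal_vector(1)[OF j] by (simp add: orth_proj_self_adjoint orth_proj_id span_base)
    also have "\<dots> = (u j \<bullet> v j)\<^sup>2 * (a \<bullet> u j)"
      using orth_proj_V_u[OF j] av[OF j] by (simp add: power2_eq_square)
    finally show ?thesis using ne[OF j] by simp
  qed
  define b where "b = orth_proj V a"
  have bV: "b \<in> V" unfolding b_def using subspace_V by (rule orth_proj_in_subspace)
  have bv: "b \<bullet> v j = 0" if j: "j < r" for j
    unfolding b_def using projV principal_vector(2)[OF j] av[OF j] au[OF j] by simp
  have b0: "b \<noteq> 0" using ev a0 \<mu>0 unfolding b_def by auto
  have "r = dim U \<or> r = dim V" by linarith
  then show False
  proof
    assume "r = dim U"
    then have "a \<in> span (u ` {..<r})" using span_principal_vectors_U aU by blast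
    then have "orthogonal a a" by (rule orthogonal_to_span) (use au in \<open>auto simp: orthogonal_def\<close>)
    then show False using a0 by (simp add: orthogonal_def)
  next
    assume "r = dim V"
    then have "b \<in> span (v ` {..<r})"
      using principal_vectors.span_principal_vectors_U[OF principal_vectors_swap] bV
      by (auto simp: min.commute)
    then have "orthogonal b b" by (rule orthogonal_to_span) (use bv in \<open>auto simp: orthogonal_def\<close>)
    then show False using b0 by (simp add: orthogonal_def)
  qed
qed

end

section \<open>The forgetting bound\<close>

definition rej_sandwich :: "'a::euclidean_space set \<Rightarrow> 'a set \<Rightarrow> 'a \<Rightarrow> 'a" where
  "rej_sandwich U V x = orth_rej U (orth_rej V (orth_rej U x))"

lemma self_adjoint_rej_sandwich: "self_adjoint (rej_sandwich U V)"
  unfolding self_adjoint_def rej_sandwich_def[abs_def]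
  by (auto intro!: linearI simp: linear_add[OF linear_orth_rej] linear_scale[OF linear_orth_rej]
      orth_rej_self_adjoint)

lemma orth_rej_rej_sandwich_power [simp]:
  "orth_rej U ((rej_sandwich U V ^^ m) (orth_rej U x)) = (rej_sandwich U V ^^ m) (orth_rej U x)"
  by (cases m) (simp_all add: rej_sandwich_def)

lemma orth_rej_cycle_power:
  "((\<lambda>x. orth_rej V (orth_rej U x)) ^^ Suc m) x = orth_rej V ((rej_sandwich U V ^^ m) (orth_rej U x))"
proof (induction m)
  case (Suc m)
  let ?G = "\<lambda>x. orth_rej V (orth_rej U x)" and ?y = "(rej_sandwich U V ^^ m) (orth_rej U x)"
  have "(?G ^^ Suc (Suc m)) x = ?G ((?G ^^ Suc m) x)" by simp
  also have "\<dots> = orth_rej V (orth_rej U (orth_rej V ?y))" by (simp only: Suc.IH)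
  also have "\<dots> = orth_rej V (rej_sandwich U V ?y)"
    using orth_rej_rej_sandwich_power[where m = m] by (simp add: rej_sandwich_def[of U V ?y])
  finally show ?case by simp
qed simp

lemma inner_self_adjoint_power_eigenvector:
  assumes "self_adjoint f" and ev: "f e = \<mu> *\<^sub>R e"
  shows "(f ^^ m) x \<bullet> e = \<mu> ^ m * (x \<bullet> e)"
proof (induction m)
  case (Suc m)
  have "(f ^^ Suc m) x \<bullet> e = (f ^^ m) x \<bullet> f e"
    using assms(1) unfolding self_adjoint_def by simp
  then show ?case using Suc.IH ev by simp
qed simp

lemma norm_orth_proj_orth_rej_sq:
  assumes y: "orth_rej U y = y"
  shows "(norm (orth_proj U (orth_rej V y)))\<^sup>2 = y \<bullet> rej_sandwich U V y - (norm (rej_sandwich U V y))\<^sup>2"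
proof -
  have "y \<bullet> rej_sandwich U V y = y \<bullet> orth_rej V y"
    using orth_rej_self_adjoint[of U y "orth_rej V y"] y by (simp add: rej_sandwich_def)
  then show ?thesis
    using norm_orth_proj_sq[of "orth_rej V y" U] y by (simp add: rej_sandwich_def inner_orth_rej_self)
qed

lemma eigenvalue_rej_sandwich_bounds:
  assumes "norm e = 1" and ev: "rej_sandwich U V e = \<mu> *\<^sub>R e"
  shows "0 \<le> \<mu>" "\<mu> \<le> 1"
proof -
  have "\<mu> = rej_sandwich U V e \<bullet> e" using ev assms(1) by (simp add: dot_square_norm)
  also have "\<dots> = orth_rej V (orth_rej U e) \<bullet> orth_rej U e"
    unfolding rej_sandwich_def by (rule orth_rej_self_adjoint)
  also have "\<dots> = (norm (orth_rej V (orth_rej U e)))\<^sup>2"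
    using inner_orth_rej_self[of "orth_rej U e" V] by (simp add: inner_commute)
  finally have \<mu>: "\<mu> = (norm (orth_rej V (orth_rej U e)))\<^sup>2" .
  show "0 \<le> \<mu>" unfolding \<mu> by simp
  have "norm (orth_rej V (orth_rej U e)) \<le> 1"
    using norm_orth_rej_le[of V "orth_rej U e"] norm_orth_rej_le[of U e] assms(1) by simp
  then show "\<mu> \<le> 1" unfolding \<mu> by (simp add: power_le_one)
qed

lemma norm_orth_proj_orth_rej_cycle_sq:
  assumes E: "finite E" "\<And>e. e \<in> E \<Longrightarrow> norm e = 1" "pairwise orthogonal E" "span E = UNIV"
    and ev: "\<And>e. e \<in> E \<Longrightarrow> rej_sandwich U V e = \<mu> e *\<^sub>R e"
  shows "(norm (orth_proj U (((\<lambda>x. orth_rej V (orth_rej U x)) ^^ Suc m) w)))\<^sup>2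
    = (\<Sum>e\<in>E. (orth_rej U w \<bullet> e)\<^sup>2 * (\<mu> e ^ (2 * m + 1) * (1 - \<mu> e)))"
proof -
  let ?M = "rej_sandwich U V" and ?x = "orth_rej U w"
  define y where "y = (?M ^^ m) ?x"
  have My: "?M y = (?M ^^ Suc m) ?x" unfolding y_def by simp
  have ye: "y \<bullet> e = \<mu> e ^ m * (?x \<bullet> e)" if "e \<in> E" for e
    unfolding y_def by (rule inner_self_adjoint_power_eigenvector[OF self_adjoint_rej_sandwich ev[OF that]])
  have Mye: "?M y \<bullet> e = \<mu> e ^ Suc m * (?x \<bullet> e)" if "e \<in> E" for e
    unfolding My by (rule inner_self_adjoint_power_eigenvector[OF self_adjoint_rej_sandwich ev[OF that]])
  have "(norm (orth_proj U (((\<lambda>x. orth_rej V (orth_rej U x)) ^^ Suc m) w)))\<^sup>2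
      = y \<bullet> ?M y - (norm (?M y))\<^sup>2"
    unfolding orth_rej_cycle_power y_def by (rule norm_orth_proj_orth_rej_sq) simp
  also have "\<dots> = (\<Sum>e\<in>E. (y \<bullet> e) * (?M y \<bullet> e) - (?M y \<bullet> e) * (?M y \<bullet> e))"
    using orthonormal_basis_inner[OF E, of y "?M y"] orthonormal_basis_inner[OF E, of "?M y" "?M y"]
    by (simp add: dot_square_norm sum_subtractf)
  also have "\<dots> = (\<Sum>e\<in>E. (?x \<bullet> e)\<^sup>2 * (\<mu> e ^ (2 * m + 1) * (1 - \<mu> e)))"
  proof (rule sum.cong)
    fix e assume "e \<in> E"
    have p: "\<mu> e ^ (2 * m + 1) = \<mu> e ^ m * \<mu> e ^ m * \<mu> e" by (simp add: mult_2 power_add)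
    show "(y \<bullet> e) * (?M y \<bullet> e) - (?M y \<bullet> e) * (?M y \<bullet> e)
        = (?x \<bullet> e)\<^sup>2 * (\<mu> e ^ (2 * m + 1) * (1 - \<mu> e))"
      unfolding ye[OF \<open>e \<in> E\<close>] Mye[OF \<open>e \<in> E\<close>] p by (simp add: power2_eq_square algebra_simps)
  qed simp
  finally show ?thesis .
qed

context principal_vectors
begin

lemma eigenvalue_rej_sandwich:
  assumes e0: "e \<noteq> 0" and ev: "rej_sandwich U V e = \<mu> *\<^sub>R e" and \<mu>: "0 < \<mu>" "\<mu> < 1"
  shows "\<exists>j<r. (u j \<bullet> v j)\<^sup>2 = \<mu>"
proof -
  have "orth_rej U (\<mu> *\<^sub>R e) = \<mu> *\<^sub>R e"
    using ev[symmetric] by (simp add: rej_sandwich_def)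
  then have eU: "orth_rej U e = e"
    using \<mu>(1) by (simp add: linear_scale[OF linear_orth_rej])
  define p where "p = orth_rej V e"
  define a where "a = orth_proj U p"
  have "a = p - orth_rej U p" unfolding a_def orth_rej_def by simp
  also have "orth_rej U p = \<mu> *\<^sub>R e" using ev eU unfolding rej_sandwich_def p_def by simp
  finally have a_eq: "a = p - \<mu> *\<^sub>R e" .
  have aU: "a \<in> U" unfolding a_def using subspace_U by (rule orth_proj_in_subspace)
  have a0: "a \<noteq> 0"
  proof
    assume "a = 0"
    then have p: "p = \<mu> *\<^sub>R e" using a_eq by simp
    have "e \<bullet> p = p \<bullet> p"
      using inner_orth_rej_self[of e V] unfolding p_def by (simp add: power2_norm_eq_inner)
    then show False unfolding p using e0 \<mu> by simp
  qed
  have pUe: "orth_proj U e = 0" using eU orth_proj_orth_rej by metis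
  have pVp: "orth_proj V p = 0" unfolding p_def by simp
  have "orth_proj U (orth_proj V a) = orth_proj U (- \<mu> *\<^sub>R orth_proj V e)"
    unfolding a_eq orth_proj_diff orth_proj_scale pVp by simp
  also have "orth_proj V e = e - p" unfolding p_def orth_rej_def by simp
  also have "orth_proj U (- \<mu> *\<^sub>R (e - p)) = \<mu> *\<^sub>R a"
    unfolding orth_proj_scale orth_proj_diff pUe a_def by simp
  finally show ?thesis using eigenvalue_orth_proj_orth_proj[OF aU a0] \<mu> by simp
qed

lemma eigenvalue_weight_le:
  assumes p: "0 < p" and bound_nonneg: "0 \<le> bound"
    and bound: "\<And>j. j < r \<Longrightarrow> \<bar>u j \<bullet> v j\<bar> < 1 \<Longrightarrow> ((u j \<bullet> v j)\<^sup>2) ^ p * (1 - (u j \<bullet> v j)\<^sup>2) \<le> bound"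
    and e: "norm e = 1" and ev: "rej_sandwich U V e = \<mu> *\<^sub>R e"
  shows "\<mu> ^ p * (1 - \<mu>) \<le> bound"
proof -
  have \<mu>01: "0 \<le> \<mu>" "\<mu> \<le> 1" using eigenvalue_rej_sandwich_bounds[OF e ev] by auto
  show ?thesis
  proof (cases "\<mu> = 0 \<or> \<mu> = 1")
    case True
    then show ?thesis using bound_nonneg p by (auto simp: zero_power)
  next
    case False
    then have "0 < \<mu>" "\<mu> < 1" using \<mu>01 by linarith+
    moreover have "e \<noteq> 0" using e by auto
    ultimately obtain j where j: "j < r" "(u j \<bullet> v j)\<^sup>2 = \<mu>"
      using eigenvalue_rej_sandwich[OF _ ev] by blast
    then have "(u j \<bullet> v j)\<^sup>2 < 1" using \<open>\<mu> < 1\<close> by simp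
    then have "\<bar>u j \<bullet> v j\<bar> < 1" by (simp only: abs_square_less_1)
    then show ?thesis using bound[OF j(1)] j(2) by simp
  qed
qed

lemma norm_orth_proj_orth_rej_cycle_le:
  assumes n: "n \<ge> 1" and bound_nonneg: "0 \<le> bound"
    and bound: "\<And>j. j < r \<Longrightarrow> \<bar>u j \<bullet> v j\<bar> < 1 \<Longrightarrow>
      ((u j \<bullet> v j)\<^sup>2) ^ (2 * n - 1) * (1 - (u j \<bullet> v j)\<^sup>2) \<le> bound"
  shows "(norm (orth_proj U (((\<lambda>x. orth_rej V (orth_rej U x)) ^^ n) w)))\<^sup>2 \<le> bound * (norm w)\<^sup>2"
proof -
  obtain m where nm: "n = Suc m" using n by (cases n) auto
  obtain E where E: "finite E" "\<And>e. e \<in> E \<Longrightarrow> norm e = 1" "pairwise orthogonal E" "span E = UNIV"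
    and ev0: "\<And>e. e \<in> E \<Longrightarrow> rej_sandwich U V e = (rej_sandwich U V e \<bullet> e) *\<^sub>R e"
    using self_adjoint_orthonormal_eigenbasis[OF self_adjoint_rej_sandwich[of U V]] by blast
  define \<mu> where "\<mu> e = rej_sandwich U V e \<bullet> e" for e
  have ev: "rej_sandwich U V e = \<mu> e *\<^sub>R e" if "e \<in> E" for e
    unfolding \<mu>_def by (rule ev0[OF that])
  have weight: "\<mu> e ^ (2 * m + 1) * (1 - \<mu> e) \<le> bound" if e: "e \<in> E" for e
    using bound nm by (intro eigenvalue_weight_le[OF _ bound_nonneg _ E(2)[OF e] ev[OF e]]) auto
  have "(norm (orth_proj U (((\<lambda>x. orth_rej V (orth_rej U x)) ^^ n) w)))\<^sup>2
      = (\<Sum>e\<in>E. (orth_rej U w \<bullet> e)\<^sup>2 * (\<mu> e ^ (2 * m + 1) * (1 - \<mu> e)))"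
    unfolding nm using E ev by (rule norm_orth_proj_orth_rej_cycle_sq)
  also have "\<dots> \<le> (\<Sum>e\<in>E. (orth_rej U w \<bullet> e)\<^sup>2 * bound)"
  proof (rule sum_mono)
    fix e assume "e \<in> E"
    show "(orth_rej U w \<bullet> e)\<^sup>2 * (\<mu> e ^ (2 * m + 1) * (1 - \<mu> e)) \<le> (orth_rej U w \<bullet> e)\<^sup>2 * bound"
      using weight[OF \<open>e \<in> E\<close>] by (rule mult_left_mono) simp
  qed
  also have "\<dots> = (norm (orth_rej U w))\<^sup>2 * bound"
  proof -
    have "(norm (orth_rej U w))\<^sup>2 = (\<Sum>e\<in>E. (orth_rej U w \<bullet> e)\<^sup>2)"
      unfolding power2_norm_eq_inner using orthonormal_basis_inner[OF E, of "orth_rej U w" "orth_rej U w"]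
      by (simp add: power2_eq_square)
    then show ?thesis by (simp add: sum_distrib_right)
  qed
  also have "\<dots> \<le> (norm w)\<^sup>2 * bound"
    using power_mono[OF norm_orth_rej_le[of U w]] bound_nonneg by (simp add: mult_right_mono)
  finally show ?thesis by (simp add: mult.commute)
qed

text \<open>v_i - (u_i . v_i) u_i spans, together with u_i, a plane invariant under both
  projections, on which one cycle of the rejections acts by the factor u_i . v_i.\<close>
lemma orth_rej_cycle_principal_plane:
  assumes i: "i < r"
  shows "orth_proj U (((\<lambda>x. orth_rej V (orth_rej U x)) ^^ Suc m) (v i - (u i \<bullet> v i) *\<^sub>R u i))
    = ((u i \<bullet> v i) ^ (2 * m + 1) * ((u i \<bullet> v i)\<^sup>2 - 1)) *\<^sub>R u i"
proof -
  define a b c where "a = u i" and "b = v i" and "c = u i \<bullet> v i"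
  define g h where "g = b - c *\<^sub>R a" and "h = c *\<^sub>R b - a"
  let ?G = "\<lambda>x. orth_rej V (orth_rej U x)"
  have pUa: "orth_proj U a = a" and pVb: "orth_proj V b = b"
    using principal_vector[OF i] unfolding a_def b_def by (simp_all add: orth_proj_id span_base)
  have pUb: "orth_proj U b = c *\<^sub>R a" and pVa: "orth_proj V a = c *\<^sub>R b"
    unfolding a_def b_def c_def using orth_proj_U_v[OF i] orth_proj_V_u[OF i] by auto
  note lin = orth_proj_diff orth_proj_scale linear_scale[OF linear_orth_rej]
  have Gg: "?G g = c *\<^sub>R h" and Gh: "?G h = c\<^sup>2 *\<^sub>R h"
    unfolding g_def h_def orth_rej_def
    by (simp_all add: lin pUa pUb pVa pVb algebra_simps power2_eq_square)
  have "(?G ^^ Suc m) g = c ^ (2 * m + 1) *\<^sub>R h"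
  proof (induction m)
    case (Suc m)
    have "(?G ^^ Suc (Suc m)) g = ?G ((?G ^^ Suc m) g)" by simp
    also have "\<dots> = c ^ (2 * m + 1) *\<^sub>R ?G h" by (simp only: Suc.IH lin)
    also have "\<dots> = c ^ (2 * Suc m + 1) *\<^sub>R h" by (simp add: Gh power2_eq_square)
    finally show ?case .
  qed (simp add: Gg)
  moreover have "orth_proj U h = (c\<^sup>2 - 1) *\<^sub>R a"
    unfolding h_def by (simp add: lin pUa pUb power2_eq_square algebra_simps)
  ultimately show ?thesis unfolding a_def b_def c_def g_def by (simp add: lin)
qed

lemma norm_principal_plane_vector:
  assumes i: "i < r"
  shows "(norm (v i - (u i \<bullet> v i) *\<^sub>R u i))\<^sup>2 = 1 - (u i \<bullet> v i)\<^sup>2"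
proof -
  have "u i \<bullet> u i = 1" "v i \<bullet> v i = 1" using principal_vector(3,4)[OF i] by (simp_all add: norm_eq_1)
  then show ?thesis
    unfolding power2_norm_eq_inner
    by (simp add: inner_diff_left inner_diff_right inner_commute[of "v i" "u i"] power2_eq_square algebra_simps)
qed

lemma orth_rej_cycle_power_scale:
  "((\<lambda>x. orth_rej V (orth_rej U x)) ^^ n) (s *\<^sub>R x) = s *\<^sub>R ((\<lambda>x. orth_rej V (orth_rej U x)) ^^ n) x"
  by (induction n) (simp_all add: linear_scale[OF linear_orth_rej])

lemma orth_rej_cycle_extremal_vector:
  assumes i: "i < r" and c1: "\<bar>u i \<bullet> v i\<bar> < 1" and n: "n \<ge> 1"
  obtains g where "norm g = 1" "g \<in> span (U \<union> V)"
    "(norm (orth_proj U (((\<lambda>x. orth_rej V (orth_rej U x)) ^^ n) g)))\<^sup>2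
       = ((u i \<bullet> v i)\<^sup>2) ^ (2 * n - 1) * (1 - (u i \<bullet> v i)\<^sup>2)"
proof -
  define c where "c = u i \<bullet> v i"
  define t where "t = sqrt (1 - c\<^sup>2)"
  define g where "g = (1 / t) *\<^sub>R (v i - c *\<^sub>R u i)"
  obtain m where m: "n = Suc m" using n by (cases n) auto
  have c1': "c\<^sup>2 < 1" using c1 unfolding c_def by (simp add: abs_square_less_1)
  then have t: "t > 0" "t\<^sup>2 = 1 - c\<^sup>2" unfolding t_def by simp_all
  have "t = norm (v i - c *\<^sub>R u i)"
    unfolding t_def using norm_principal_plane_vector[OF i] by (intro real_sqrt_unique) (simp_all add: c_def)
  then have ng: "norm g = 1" unfolding g_def using t(1) by simp
  have gspan: "g \<in> span (U \<union> V)"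
    unfolding g_def using principal_vector(1,2)[OF i] by (intro span_scale span_diff span_base) auto
  have "(norm (orth_proj U (((\<lambda>x. orth_rej V (orth_rej U x)) ^^ n) g)))\<^sup>2
      = (c ^ (2 * m + 1))\<^sup>2 * ((c\<^sup>2 - 1)\<^sup>2 / t\<^sup>2)"
    using principal_vector(3)[OF i]
    unfolding g_def m orth_rej_cycle_power_scale orth_proj_scale
      orth_rej_cycle_principal_plane[OF i, folded c_def]
    by (simp add: power_mult_distrib power_divide)
  also have "(c\<^sup>2 - 1)\<^sup>2 / t\<^sup>2 = 1 - c\<^sup>2"
  proof -
    have "1 - c\<^sup>2 \<noteq> 0" using c1' by simp
    then show ?thesis using t(2) by (simp add: power2_commute[of "c\<^sup>2"] power2_eq_square[of "1 - c\<^sup>2"])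
  qed
  also have "(c ^ (2 * m + 1))\<^sup>2 = (c\<^sup>2) ^ (2 * m + 1)"
    by (simp only: power_mult[symmetric] mult.commute)
  finally show ?thesis using that[OF ng gspan] m unfolding c_def by simp
qed

end

section \<open>Unit singular values\<close>

lemma self_adjoint_idempotent_if_eigenvalues_0_1:
  fixes f :: "'a::euclidean_space \<Rightarrow> 'a"
  assumes sa: "self_adjoint f"
    and ev01: "\<And>e \<mu>. e \<noteq> 0 \<Longrightarrow> f e = \<mu> *\<^sub>R e \<Longrightarrow> \<mu> = 0 \<or> \<mu> = 1"
  shows "f (f x) = f x"
proof -
  have lin: "linear f" and sym: "\<And>x y. f x \<bullet> y = x \<bullet> f y" using sa unfolding self_adjoint_def by auto
  obtain E where E: "finite E" "\<And>e. e \<in> E \<Longrightarrow> norm e = 1" "pairwise orthogonal E" "span E = UNIV"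
    and ev: "\<And>e. e \<in> E \<Longrightarrow> f e = (f e \<bullet> e) *\<^sub>R e"
    using self_adjoint_orthonormal_eigenbasis[OF sa] by blast
  have idem: "f (f e) = f e" if e: "e \<in> E" for e
  proof -
    define \<mu> where "\<mu> = f e \<bullet> e"
    have fe: "f e = \<mu> *\<^sub>R e" unfolding \<mu>_def by (rule ev[OF e])
    have "e \<noteq> 0" using E(2)[OF e] by auto
    then have "\<mu> = 0 \<or> \<mu> = 1" using ev01 fe by blast
    then show ?thesis using fe by (auto simp: linear_scale[OF lin] linear_0[OF lin])
  qed
  have "(f (f x) - f x) \<bullet> e = 0" if "e \<in> E" for e
  proof -
    have "(f (f x) - f x) \<bullet> e = x \<bullet> (f (f e) - f e)"
      by (simp add: inner_diff_left inner_diff_right sym)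
    then show ?thesis using idem[OF that] by simp
  qed
  then have "orthogonal (f (f x) - f x) (f (f x) - f x)"
    using orthogonal_to_span[of "f (f x) - f x" E] E(4) by (auto simp: orthogonal_def)
  then show ?thesis by (simp add: orthogonal_def)
qed

lemma transpose_mult_eq_orth_proj_if_singular_values_1:
  fixes X :: "real^'d^'n"
  assumes sv: "\<forall>\<sigma>. singular_value X \<sigma> \<and> \<sigma> \<noteq> 0 \<longrightarrow> \<sigma> = 1"
  shows "transpose X *v (X *v z) = orth_proj (rowspace X) z"
proof -
  define A where "A x = transpose X *v (X *v x)" for x
  have "x \<bullet> A y = (X *v x) \<bullet> (X *v y)" for x y
    unfolding A_def by (rule inner_matrix_vector_transpose[symmetric])
  then have sym: "A x \<bullet> y = x \<bullet> A y" for x y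
    by (metis inner_commute)
  have "linear A"
    unfolding A_def by (rule linearI) (simp_all add: matrix_vector_right_distrib matrix_vector_mult_scaleR)
  then have sa: "self_adjoint A" using sym unfolding self_adjoint_def by blast
  have ev01: "\<mu> = 0 \<or> \<mu> = 1" if e: "e \<noteq> 0" "A e = \<mu> *\<^sub>R e" for e \<mu>
  proof -
    have "\<mu> * (e \<bullet> e) = (X *v e) \<bullet> (X *v e)"
      using e(2) inner_matrix_vector_transpose[of X e "X *v e"] unfolding A_def by simp
    then have "0 \<le> \<mu> * (e \<bullet> e)" by simp
    moreover have "0 < e \<bullet> e" using e(1) by simp
    ultimately have "\<mu> \<ge> 0" by (simp add: zero_le_mult_iff)
    then have "singular_value X (sqrt \<mu>)"
      using e unfolding singular_value_def A_def
      by (auto simp: matrix_vector_mul_assoc[symmetric] scalar_mult_eq_scaleR)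
    then have "sqrt \<mu> = 0 \<or> sqrt \<mu> = 1" using sv by blast
    then show ?thesis by auto
  qed
  show ?thesis
  proof (rule orth_proj_unique[symmetric])
    show "transpose X *v (X *v z) \<in> span (rowspace X)" unfolding rowspace_def by (rule span_base, rule rangeI)
    fix w assume "w \<in> span (rowspace X)"
    have "(X *v (z - A z)) \<bullet> (X *v (z - A z)) = (z - A z) \<bullet> (A z - A (A z))"
      unfolding A_def inner_matrix_vector_transpose by (simp add: matrix_vector_mult_diff_distrib)
    also have "A (A z) = A z" by (rule self_adjoint_idempotent_if_eigenvalues_0_1[OF sa ev01])
    finally have "X *v (z - A z) = 0" by simp
    then show "(z - transpose X *v (X *v z)) \<bullet> w = 0"
      using \<open>w \<in> span (rowspace X)\<close> unfolding A_def matrix_vector_mult_eq_0_iff_orthogonal_rowspace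
      by simp
  qed
qed

lemma norm_matrix_vector_mult_eq_if_singular_values_1:
  fixes X :: "real^'d^'n"
  assumes "\<forall>\<sigma>. singular_value X \<sigma> \<and> \<sigma> \<noteq> 0 \<longrightarrow> \<sigma> = 1"
  shows "norm (X *v z) = norm (orth_proj (rowspace X) z)"
proof -
  have "(norm (X *v z))\<^sup>2 = z \<bullet> orth_proj (rowspace X) z"
    unfolding power2_norm_eq_inner inner_matrix_vector_transpose
      transpose_mult_eq_orth_proj_if_singular_values_1[OF assms] ..
  also have "\<dots> = (norm (orth_proj (rowspace X) z))\<^sup>2"
    unfolding power2_norm_eq_inner using orth_proj_self_adjoint[of "rowspace X" z "orth_proj (rowspace X) z"]
    by simp
  finally show ?thesis by (simp add: power2_eq_iff_nonneg)
qed

lemma norm_matrix_vector_mult_le_orth_proj: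
  fixes X :: "real^'d^'n"
  assumes "spec_norm X \<le> 1"
  shows "norm (X *v z) \<le> norm (orth_proj (rowspace X) z)"
proof -
  have "norm (X *v z) = norm (X *v orth_proj (rowspace X) z)" by simp
  also have "\<dots> \<le> spec_norm X * norm (orth_proj (rowspace X) z)"
    unfolding spec_norm_def by (rule onorm) (rule matrix_vector_mul_bounded_linear)
  also have "\<dots> \<le> norm (orth_proj (rowspace X) z)"
    using assms onorm_pos_le[OF matrix_vector_mul_bounded_linear, of X]
    by (intro mult_left_le_one_le) (auto simp: spec_norm_def)
  finally show ?thesis .
qed

section \<open>Principal angles and the bound\<close>

lemma max0_nonneg: "finite A \<Longrightarrow> (\<And>x. x \<in> A \<Longrightarrow> 0 \<le> x) \<Longrightarrow> 0 \<le> max0 A"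
  unfolding max0_def by (auto simp: Max_ge_iff)

lemma max0_upper: "finite A \<Longrightarrow> x \<in> A \<Longrightarrow> x \<le> max0 A"
  unfolding max0_def by auto

lemma max0_in: "finite A \<Longrightarrow> max0 A \<in> insert 0 A"
  unfolding max0_def by auto

context principal_vectors
begin

lemma cos_principal_angle_sq: "i < r \<Longrightarrow> (cos (principal_angle u v i))\<^sup>2 = (u i \<bullet> v i)\<^sup>2"
  unfolding principal_angle_def using abs_inner_u_v_le_1 by (simp add: cos_arccos_abs)

lemma principal_angle_pos_iff: "i < r \<Longrightarrow> principal_angle u v i > 0 \<longleftrightarrow> \<bar>u i \<bullet> v i\<bar> < 1"
  unfolding principal_angle_def using abs_inner_u_v_le_1[of i] arccos_lbound[of "\<bar>u i \<bullet> v i\<bar>"]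
    arccos_eq_0_iff[of "\<bar>u i \<bullet> v i\<bar>"]
  by (auto simp: order_less_le)

lemma principal_angle_bound_set:
  "{(cos (principal_angle u v i))\<^sup>2 ^ p * (1 - (cos (principal_angle u v i))\<^sup>2) | i. i < r \<and> principal_angle u v i > 0}
    = (\<lambda>i. ((u i \<bullet> v i)\<^sup>2) ^ p * (1 - (u i \<bullet> v i)\<^sup>2)) ` {i. i < r \<and> \<bar>u i \<bullet> v i\<bar> < 1}"
  (is "?L = _")
proof -
  have "?L = (\<lambda>i. (cos (principal_angle u v i))\<^sup>2 ^ p * (1 - (cos (principal_angle u v i))\<^sup>2))
      ` {i. i < r \<and> principal_angle u v i > 0}"
    by blast
  also have "{i. i < r \<and> principal_angle u v i > 0} = {i. i < r \<and> \<bar>u i \<bullet> v i\<bar> < 1}"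
    using principal_angle_pos_iff by blast
  finally show ?thesis by (auto simp: cos_principal_angle_sq intro: image_cong)
qed

lemma principal_bound:
  fixes p :: nat
  defines "B \<equiv> max0 {(cos (principal_angle u v i))\<^sup>2 ^ p * (1 - (cos (principal_angle u v i))\<^sup>2)
                      | i. i < r \<and> principal_angle u v i > 0}"
  shows "0 \<le> B"
    and "\<And>j. j < r \<Longrightarrow> \<bar>u j \<bullet> v j\<bar> < 1 \<Longrightarrow> ((u j \<bullet> v j)\<^sup>2) ^ p * (1 - (u j \<bullet> v j)\<^sup>2) \<le> B"
    and "B = 0 \<or> (\<exists>j<r. \<bar>u j \<bullet> v j\<bar> < 1 \<and> B = ((u j \<bullet> v j)\<^sup>2) ^ p * (1 - (u j \<bullet> v j)\<^sup>2))"
proof -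
  let ?A = "(\<lambda>i. ((u i \<bullet> v i)\<^sup>2) ^ p * (1 - (u i \<bullet> v i)\<^sup>2)) ` {i. i < r \<and> \<bar>u i \<bullet> v i\<bar> < 1}"
  have B: "B = max0 ?A" and fin: "finite ?A" unfolding B_def principal_angle_bound_set by simp_all
  show "0 \<le> B" unfolding B using fin by (rule max0_nonneg) (auto simp: abs_square_le_1)
  show "((u j \<bullet> v j)\<^sup>2) ^ p * (1 - (u j \<bullet> v j)\<^sup>2) \<le> B" if "j < r" "\<bar>u j \<bullet> v j\<bar> < 1" for j
    unfolding B using fin by (rule max0_upper) (use that in auto)
  show "B = 0 \<or> (\<exists>j<r. \<bar>u j \<bullet> v j\<bar> < 1 \<and> B = ((u j \<bullet> v j)\<^sup>2) ^ p * (1 - (u j \<bullet> v j)\<^sup>2))"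
    using max0_in[OF fin] unfolding B by auto
qed

end

section \<open>Forgetting of the cyclic scheme\<close>

lemma in_S2_relabel:
  "in_S2 X1 y1 X2 y2 \<Longrightarrow> norm w \<le> 1 \<Longrightarrow> in_S2 X1 (X1 *v w) X2 (X2 *v w)"
  unfolding in_S2_def is_task_def by blast

lemma in_S2_min_norm_sol:
  assumes "in_S2 X1 y1 X2 y2"
  shows "X1 *v min_norm_sol X1 y1 X2 y2 = y1" "X2 *v min_norm_sol X1 y1 X2 y2 = y2"
    "norm (min_norm_sol X1 y1 X2 y2) \<le> 1"
proof -
  obtain w where w: "norm w \<le> 1" "X1 *v w = y1" "X2 *v w = y2"
    using assms unfolding in_S2_def by blast
  show "X1 *v min_norm_sol X1 y1 X2 y2 = y1" "X2 *v min_norm_sol X1 y1 X2 y2 = y2"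
    unfolding min_norm_sol_eq_orth_proj[OF w(2,3)] using w
    by (auto simp: matrix_vector_mult_orth_proj_rowspace_union)
  show "norm (min_norm_sol X1 y1 X2 y2) \<le> 1"
    unfolding min_norm_sol_eq_orth_proj[OF w(2,3)] using norm_orth_proj_le w(1) by (rule order.trans)
qed

lemma forgetting_eq_min_norm_sol:
  assumes "in_S2 X1 y1 X2 y2" "n \<ge> 1"
  shows "forgetting X1 y1 X2 y2 (2 * n)
    = (1/2) * (norm (X1 *v (kerproj_cycle X1 X2 ^^ n) (min_norm_sol X1 y1 X2 y2)))\<^sup>2"
  using forgetting_even[OF in_S2_min_norm_sol(1,2)[OF assms(1)] assms(2)] .

lemma forgetting_zero_labels: "n \<ge> 1 \<Longrightarrow> forgetting X1 0 X2 0 (2 * n) = 0"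
  using forgetting_even[of X1 0 0 X2 0 n] by (simp add: kerproj_cycle_power_zero)

lemma forgetting_le_principal_bound:
  assumes S: "in_S2 X1 y1 X2 y2" and n: "n \<ge> 1"
    and pv: "principal_seq (rowspace X1) (rowspace X2) u v"
    and bound_nonneg: "0 \<le> bound"
    and bound: "\<And>j. j < min (dim (rowspace X1)) (dim (rowspace X2)) \<Longrightarrow> \<bar>u j \<bullet> v j\<bar> < 1 \<Longrightarrow>
      ((u j \<bullet> v j)\<^sup>2) ^ (2 * n - 1) * (1 - (u j \<bullet> v j)\<^sup>2) \<le> bound"
  shows "forgetting X1 y1 X2 y2 (2 * n) \<le> (1/2) * bound"
proof -
  interpret principal_vectors "rowspace X1" "rowspace X2" u v
    using pv by unfold_locales (rule subspace_rowspace)+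
  let ?q = "(kerproj_cycle X1 X2 ^^ n) (min_norm_sol X1 y1 X2 y2)"
  have "norm (X1 *v ?q) \<le> norm (orth_proj (rowspace X1) ?q)"
    using S unfolding in_S2_def by (intro norm_matrix_vector_mult_le_orth_proj) blast
  then have "(norm (X1 *v ?q))\<^sup>2 \<le> (norm (orth_proj (rowspace X1) ?q))\<^sup>2"
    by (rule power_mono) simp
  also have "\<dots> \<le> bound * (norm (min_norm_sol X1 y1 X2 y2))\<^sup>2"
    unfolding kerproj_cycle_eq_orth_rej by (rule norm_orth_proj_orth_rej_cycle_le[OF n bound_nonneg bound])
  also have "\<dots> \<le> bound"
    using in_S2_min_norm_sol(3)[OF S] bound_nonneg
    by (simp add: mult_left_le power_le_one)
  finally show ?thesis unfolding forgetting_eq_min_norm_sol[OF S n] by simp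
qed

lemma forgetting_attains_principal_bound:
  assumes S: "in_S2 X1 y1 X2 y2" and n: "n \<ge> 1"
    and pv: "principal_seq (rowspace X1) (rowspace X2) u v"
    and sv: "\<forall>\<sigma>. singular_value X1 \<sigma> \<and> \<sigma> \<noteq> 0 \<longrightarrow> \<sigma> = 1"
    and i: "i < min (dim (rowspace X1)) (dim (rowspace X2))" "\<bar>u i \<bullet> v i\<bar> < 1"
  shows "\<exists>y1' y2'. in_S2 X1 y1' X2 y2' \<and>
    forgetting X1 y1' X2 y2' (2 * n) = (1/2) * (((u i \<bullet> v i)\<^sup>2) ^ (2 * n - 1) * (1 - (u i \<bullet> v i)\<^sup>2))"
proof -
  interpret principal_vectors "rowspace X1" "rowspace X2" u v
    using pv by unfold_locales (rule subspace_rowspace)+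
  obtain g where g: "norm g = 1" "g \<in> span (rowspace X1 \<union> rowspace X2)"
    and attained: "(norm (orth_proj (rowspace X1) ((kerproj_cycle X1 X2 ^^ n) g)))\<^sup>2
       = ((u i \<bullet> v i)\<^sup>2) ^ (2 * n - 1) * (1 - (u i \<bullet> v i)\<^sup>2)"
    unfolding kerproj_cycle_eq_orth_rej by (rule orth_rej_cycle_extremal_vector[OF i n])
  have S': "in_S2 X1 (X1 *v g) X2 (X2 *v g)" using in_S2_relabel[OF S] g(1) by simp
  have sol: "min_norm_sol X1 (X1 *v g) X2 (X2 *v g) = g" using g(2) by (rule min_norm_sol_eqI) auto
  have "forgetting X1 (X1 *v g) X2 (X2 *v g) (2 * n)
      = (1/2) * (((u i \<bullet> v i)\<^sup>2) ^ (2 * n - 1) * (1 - (u i \<bullet> v i)\<^sup>2))"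
    unfolding forgetting_eq_min_norm_sol[OF S' n] sol norm_matrix_vector_mult_eq_if_singular_values_1[OF sv]
      attained ..
  then show ?thesis using S' by blast
qed

theorem mainTheorem4:
  fixes X1 :: "real^'d^'n1" and y1 :: "real^'n1"
    and X2 :: "real^'d^'n2" and y2 :: "real^'n2"
    and n k :: nat and u v :: "nat \<Rightarrow> real^'d"
  assumes S: "in_S2 X1 y1 X2 y2"
    and n: "n \<ge> 1" and k: "k = 2 * n"
    and pv: "principal_seq (rowspace X1) (rowspace X2) u v"
  defines "r \<equiv> min (dim (rowspace X1)) (dim (rowspace X2))"
  defines "B \<equiv> max0 {(cos (principal_angle u v i))\<^sup>2 ^ (k - 1) * (1 - (cos (principal_angle u v i))\<^sup>2)
                      | i. i < r \<and> principal_angle u v i > 0}"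
  shows "forgetting X1 y1 X2 y2 k \<le> (1/2) * B
     \<and> ((\<forall>\<sigma>. singular_value X1 \<sigma> \<and> \<sigma> \<noteq> 0 \<longrightarrow> \<sigma> = 1) \<longrightarrow>
          forgetting X1 y1 X2 y2 k =
            (1/2) * (norm ((mat 1 - kerproj X1) *v
                ((\<lambda>x. kerproj X2 *v (kerproj X1 *v x)) ^^ n) (min_norm_sol X1 y1 X2 y2)))\<^sup>2
        \<and> Sup {forgetting X1 y1' X2 y2' k | y1' y2'. in_S2 X1 y1' X2 y2'} = (1/2) * B)"
proof -
  interpret principal_vectors "rowspace X1" "rowspace X2" u v
    using pv by unfold_locales (rule subspace_rowspace)+
  note B = principal_bound[where p = "2 * n - 1", folded k r_def, folded B_def]
  have upper: "forgetting X1 y1' X2 y2' k \<le> (1/2) * B" if "in_S2 X1 y1' X2 y2'" for y1' y2'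
    unfolding k using that n pv B(1)
    by (rule forgetting_le_principal_bound) (use B(2) in \<open>auto simp: k r_def\<close>)
  have "(1/2) * B \<in> {forgetting X1 y1' X2 y2' k | y1' y2'. in_S2 X1 y1' X2 y2'}"
    if sv: "\<forall>\<sigma>. singular_value X1 \<sigma> \<and> \<sigma> \<noteq> 0 \<longrightarrow> \<sigma> = 1"
    using B(3)
  proof
    assume "B = 0"
    then show ?thesis using in_S2_relabel[OF S, of 0] forgetting_zero_labels[OF n] unfolding k by force
  next
    assume "\<exists>j<r. \<bar>u j \<bullet> v j\<bar> < 1 \<and> B = ((u j \<bullet> v j)\<^sup>2) ^ (k - 1) * (1 - (u j \<bullet> v j)\<^sup>2)"
    then obtain j where j: "j < r" "\<bar>u j \<bullet> v j\<bar> < 1"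
      and "B = ((u j \<bullet> v j)\<^sup>2) ^ (k - 1) * (1 - (u j \<bullet> v j)\<^sup>2)" by blast
    moreover obtain y1' y2' where "in_S2 X1 y1' X2 y2'"
      "forgetting X1 y1' X2 y2' (2 * n) = (1/2) * (((u j \<bullet> v j)\<^sup>2) ^ (2 * n - 1) * (1 - (u j \<bullet> v j)\<^sup>2))"
      using forgetting_attains_principal_bound[OF S n pv sv] j unfolding r_def by blast
    ultimately show ?thesis unfolding k by force
  qed
  then have "Sup {forgetting X1 y1' X2 y2' k | y1' y2'. in_S2 X1 y1' X2 y2'} = (1/2) * B"
    if "\<forall>\<sigma>. singular_value X1 \<sigma> \<and> \<sigma> \<noteq> 0 \<longrightarrow> \<sigma> = 1"
    using that upper by (intro cSup_eq_maximum) blast+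
  moreover have "forgetting X1 y1 X2 y2 k =
      (1/2) * (norm ((mat 1 - kerproj X1) *v (kerproj_cycle X1 X2 ^^ n) (min_norm_sol X1 y1 X2 y2)))\<^sup>2"
    if sv: "\<forall>\<sigma>. singular_value X1 \<sigma> \<and> \<sigma> \<noteq> 0 \<longrightarrow> \<sigma> = 1"
    unfolding k forgetting_eq_min_norm_sol[OF S n] one_minus_kerproj_apply
      norm_matrix_vector_mult_eq_if_singular_values_1[OF sv] ..
  ultimately show ?thesis using upper[OF S] by blast
qed

end
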